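(* Assume the orthonormal basis satisfies $|b_i(l)|^2=1/n$ for all $i,l\in G$, and let $\gamma=|h\rangle\langle h|$ with $|h(l)|^2=1/n$ for all $l\in G$. Then for every state $\rho$ on $L_2(G)$ and all $i,j\in G$, $$\Lambda_{i,j}(\rho\otimes\gamma)=V_{i,j}\rho V_{i,j}^*,\qquad V_{i,j}=n\,\mathcal O_hU_jB_i^*,$$ and $V_{i,j}$ is unitary.
   Context: Fix an integer $n\ge 1$ and $G=\{1,\dots,n\}$. $L_2(G)$ is the space of functions $f:G\to\mathbb C$ with inner product $\langle f,g\rangle=\sum_{k\in G}\overline{f(k)}g(k)$; $L_2(G^2)$, $L_2(G^3)$ are the analogous spaces on $G^2,G^3$, identified with tensor products via $(f\otimes g)(k,l)=f(k)g(l)$; the three factors of $L_2(G^3)=\mathcal H_1\otimes\mathcal H_2\otimes\mathcal H_3$ are numbered 1,2,3. For a vector $f$, $|f\rangle\langle f|$ is the operator $\phi\mapsto\langle f,\phi\rangle f$. $I$ is the identity. A state is a positive operator of trace 1. For $k,l\in G$, $k\oplus l$ is the unique element of $G$ congruent to $k+l$ modulo $n$. $\mathcal O_g$ is the multiplication operator $(\mathcal O_gf)(k)=g(k)f(k)$. $J:L_2(G)\to L_2(G^2)$ is $(Jf)(k,l)=f(k)\delta_{k,l}$. $U_k$ is the unitary $(U_kf)(m)=f(k\oplus m)$. $(b_k)_{k\in G}$ is a fixed orthonormal basis of $L_2(G)$ and $B_k=\mathcal O_{b_k}$. $\xi_{k,l}(m,r)=b_k(m)\delta_{m,r\oplus l}$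 and $F_{i,j}=|\xi_{i,j}\rangle\langle\xi_{i,j}|$. For a state $\gamma$, $\mathbf e(\gamma):=J\gamma J^*$. For states $\rho,\gamma$ with positive denominator, $$\Lambda_{i,j}(\rho\otimes\gamma):=\frac{\operatorname{Tr}_{1,2}(F_{i,j}\otimes I)(\rho\otimes\mathbf e(\gamma))(F_{i,j}\otimes I)}{\operatorname{Tr}_{1,2,3}(F_{i,j}\otimes I)(\rho\otimes\mathbf e(\gamma))(F_{i,j}\otimes I)},$$ with $\operatorname{Tr}_{1,2}$ the partial trace over $\mathcal H_1\otimes\mathcal H_2$ and $\operatorname{Tr}_{1,2,3}$ the full trace. *)

theory Defs
  imports "HOL-Analysis.Analysis" "HOL-Number_Theory.Cong"
begin

text \<open>Operators on the finite-dimensional spaces L2(G), L2(G^2), L2(G^3) are represented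
  by their kernels (matrices) w.r.t. the standard delta basis; only entries indexed by
  the carrier matter.\<close>

definition Gset :: "nat \<Rightarrow> nat set" where
  "Gset n = {1..n}"

definition oplus :: "nat \<Rightarrow> nat \<Rightarrow> nat \<Rightarrow> nat" where
  "oplus n k l = (THE m. m \<in> Gset n \<and> [m = k + l] (mod n))"

definition kcomp :: "'b set \<Rightarrow> ('a \<Rightarrow> 'b \<Rightarrow> complex) \<Rightarrow> ('b \<Rightarrow> 'c \<Rightarrow> complex) \<Rightarrow> 'a \<Rightarrow> 'c \<Rightarrow> complex" where
  "kcomp S A B = (\<lambda>x y. \<Sum>z\<in>S. A x z * B z y)"

definition kadj :: "('a \<Rightarrow> 'b \<Rightarrow> complex) \<Rightarrow> 'b \<Rightarrow> 'a \<Rightarrow> complex" where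
  "kadj A = (\<lambda>x y. cnj (A y x))"

definition kid :: "'a \<Rightarrow> 'a \<Rightarrow> complex" where
  "kid = (\<lambda>x y. if x = y then 1 else 0)"

definition ktensor :: "('a \<Rightarrow> 'a \<Rightarrow> complex) \<Rightarrow> ('b \<Rightarrow> 'b \<Rightarrow> complex) \<Rightarrow> ('a \<times> 'b) \<Rightarrow> ('a \<times> 'b) \<Rightarrow> complex" where
  "ktensor A B = (\<lambda>(x, y) (x', y'). A x x' * B y y')"

definition kassoc :: "('a \<times> 'b \<times> 'c \<Rightarrow> 'a \<times> 'b \<times> 'c \<Rightarrow> complex) \<Rightarrow> ('a \<times> 'b) \<times> 'c \<Rightarrow> ('a \<times> 'b) \<times> 'c \<Rightarrow> complex" where
  "kassoc X = (\<lambda>((a, b), c) ((a', b'), c'). X (a, b, c) (a', b', c'))"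

definition outer :: "('a \<Rightarrow> complex) \<Rightarrow> 'a \<Rightarrow> 'a \<Rightarrow> complex" where
  "outer f = (\<lambda>x y. f x * cnj (f y))"

definition ktrace :: "'a set \<Rightarrow> ('a \<Rightarrow> 'a \<Rightarrow> complex) \<Rightarrow> complex" where
  "ktrace S A = (\<Sum>x\<in>S. A x x)"

definition ptrace1 :: "'a set \<Rightarrow> ('a \<times> 'b \<Rightarrow> 'a \<times> 'b \<Rightarrow> complex) \<Rightarrow> 'b \<Rightarrow> 'b \<Rightarrow> complex" where
  "ptrace1 S X = (\<lambda>y y'. \<Sum>x\<in>S. X (x, y) (x, y'))"

definition inner_on :: "'a set \<Rightarrow> ('a \<Rightarrow> complex) \<Rightarrow> ('a \<Rightarrow> complex) \<Rightarrow> complex" where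
  "inner_on S f g = (\<Sum>k\<in>S. cnj (f k) * g k)"

definition positive_op :: "'a set \<Rightarrow> ('a \<Rightarrow> 'a \<Rightarrow> complex) \<Rightarrow> bool" where
  "positive_op S A \<longleftrightarrow> (\<forall>f. Im (inner_on S f (\<lambda>x. \<Sum>y\<in>S. A x y * f y)) = 0
                              \<and> Re (inner_on S f (\<lambda>x. \<Sum>y\<in>S. A x y * f y)) \<ge> 0)"

definition is_state :: "'a set \<Rightarrow> ('a \<Rightarrow> 'a \<Rightarrow> complex) \<Rightarrow> bool" where
  "is_state S A \<longleftrightarrow> positive_op S A \<and> ktrace S A = 1"

definition unitary_on :: "'a set \<Rightarrow> ('a \<Rightarrow> 'a \<Rightarrow> complex) \<Rightarrow> bool" where
  "unitary_on S V \<longleftrightarrow> (\<forall>x\<in>S. \<forall>y\<in>S. kcomp S V (kadj V) x y = kid x y \<and> kcomp S (kadj V) V x y = kid x y)"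

definition orthonormal_basis_on :: "nat \<Rightarrow> (nat \<Rightarrow> nat \<Rightarrow> complex) \<Rightarrow> bool" where
  "orthonormal_basis_on n b \<longleftrightarrow>
     (\<forall>i\<in>Gset n. \<forall>k\<in>Gset n. inner_on (Gset n) (b i) (b k) = (if i = k then 1 else 0))"

definition mult_op :: "('a \<Rightarrow> complex) \<Rightarrow> 'a \<Rightarrow> 'a \<Rightarrow> complex" where
  "mult_op g = (\<lambda>x y. if x = y then g x else 0)"

definition Jop :: "nat \<times> nat \<Rightarrow> nat \<Rightarrow> complex" where
  "Jop = (\<lambda>(k, l) m. if k = l \<and> k = m then 1 else 0)"

definition Uop :: "nat \<Rightarrow> nat \<Rightarrow> nat \<Rightarrow> nat \<Rightarrow> complex" where
  "Uop n k = (\<lambda>m m'. if m' = oplus n k m then 1 else 0)"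

definition Bop :: "(nat \<Rightarrow> nat \<Rightarrow> complex) \<Rightarrow> nat \<Rightarrow> nat \<Rightarrow> nat \<Rightarrow> complex" where
  "Bop b k = mult_op (b k)"

definition xi :: "nat \<Rightarrow> (nat \<Rightarrow> nat \<Rightarrow> complex) \<Rightarrow> nat \<Rightarrow> nat \<Rightarrow> nat \<times> nat \<Rightarrow> complex" where
  "xi n b k l = (\<lambda>(m, r). b k m * (if m = oplus n r l then 1 else 0))"

definition Fop :: "nat \<Rightarrow> (nat \<Rightarrow> nat \<Rightarrow> complex) \<Rightarrow> nat \<Rightarrow> nat \<Rightarrow> nat \<times> nat \<Rightarrow> nat \<times> nat \<Rightarrow> complex" where
  "Fop n b i j = outer (xi n b i j)"

definition embed :: "nat \<Rightarrow> (nat \<Rightarrow> nat \<Rightarrow> complex) \<Rightarrow> nat \<times> nat \<Rightarrow> nat \<times> nat \<Rightarrow> complex" where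
  "embed n \<gamma> = kcomp (Gset n) (kcomp (Gset n) Jop \<gamma>) (kadj Jop)"

definition G3 :: "nat \<Rightarrow> ((nat \<times> nat) \<times> nat) set" where
  "G3 n = (Gset n \<times> Gset n) \<times> Gset n"

definition sandwich :: "nat \<Rightarrow> (nat \<Rightarrow> nat \<Rightarrow> complex) \<Rightarrow> nat \<Rightarrow> nat \<Rightarrow>
    (nat \<Rightarrow> nat \<Rightarrow> complex) \<Rightarrow> (nat \<Rightarrow> nat \<Rightarrow> complex) \<Rightarrow> (nat \<times> nat) \<times> nat \<Rightarrow> (nat \<times> nat) \<times> nat \<Rightarrow> complex" where
  "sandwich n b i j \<rho> \<gamma> =
     (let FI = ktensor (Fop n b i j) kid
      in kcomp (G3 n) (kcomp (G3 n) FI (kassoc (ktensor \<rho> (embed n \<gamma>)))) FI)"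

definition Lambda :: "nat \<Rightarrow> (nat \<Rightarrow> nat \<Rightarrow> complex) \<Rightarrow> nat \<Rightarrow> nat \<Rightarrow>
    (nat \<Rightarrow> nat \<Rightarrow> complex) \<Rightarrow> (nat \<Rightarrow> nat \<Rightarrow> complex) \<Rightarrow> nat \<Rightarrow> nat \<Rightarrow> complex" where
  "Lambda n b i j \<rho> \<gamma> =
     (\<lambda>x y. ptrace1 (Gset n \<times> Gset n) (sandwich n b i j \<rho> \<gamma>) x y
             / ktrace (G3 n) (sandwich n b i j \<rho> \<gamma>))"

definition Vop :: "nat \<Rightarrow> (nat \<Rightarrow> nat \<Rightarrow> complex) \<Rightarrow> (nat \<Rightarrow> complex) \<Rightarrow> nat \<Rightarrow> nat \<Rightarrow> nat \<Rightarrow> nat \<Rightarrow> complex" where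
  "Vop n b h i j = (\<lambda>x y. of_nat n *
      kcomp (Gset n) (kcomp (Gset n) (mult_op h) (Uop n j)) (kadj (Bop b i)) x y)"

end

(* Flatness of b_i makes xi_{i,j} a unit vector, so the partial trace over H_1 \<otimes> H_2 of
   the sandwich by F_{i,j} \<otimes> I is the compression <xi_{i,j}| \<rho> \<otimes> e(\<gamma>) |xi_{i,j}>,
   an operator on H_3. Since e(\<gamma>) lives on the diagonal of G^2, its entries are
   h(c) conj(h(c')) conj(b_i(c \<oplus> j)) \<rho>(c \<oplus> j, c' \<oplus> j) b_i(c' \<oplus> j),
   i.e. the compression is V \<rho> V^* / n^2. V is the permutation matrix of x \<mapsto> x \<oplus> j
   with unimodular weights n h(x) conj(b_i(x \<oplus> j)), hence unitary; so the full trace is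
   Tr \<rho> / n^2 = 1 / n^2 and normalising removes the factor. *)

theory Submission
  imports Defs
begin

lemma finite_Gset [simp]: "finite (Gset n)"
  by (simp add: Gset_def)

lemma cong_Gset_imp_eq:
  assumes "m \<in> Gset n" "m' \<in> Gset n" "[m = m'] (mod n)"
  shows "m = m'"
proof -
  obtain a a' where m: "m = Suc a" "m' = Suc a'"
    using assms(1,2) by (metis Gset_def atLeastAtMost_iff not0_implies_Suc not_one_le_zero)
  have "a < n" "a' < n"
    using assms(1,2) unfolding m by (auto simp: Gset_def)
  moreover have "[a = a'] (mod n)"
    using assms(3) unfolding m by (metis Suc_eq_plus1 cong_add_rcancel_nat)
  ultimately show ?thesis unfolding m by (simp add: cong_less_modulus_unique_nat)
qed

lemma oplus_Gset_cong:
  assumes "n \<ge> 1"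
  shows "oplus n k l \<in> Gset n \<and> [oplus n k l = k + l] (mod n)"
proof -
  define m where "m = Suc ((k + l + n - 1) mod n)"
  have "[m = Suc (k + l + n - 1)] (mod n)"
    unfolding m_def cong_def by (simp add: mod_Suc_eq)
  then have m_cong: "[m = k + l] (mod n)"
    using assms by (simp add: cong_def)
  moreover have m_Gset: "m \<in> Gset n"
    using assms by (simp add: m_def Gset_def Suc_le_eq)
  moreover have "oplus n k l = m"
    unfolding oplus_def
  proof (rule the_equality)
    show "m \<in> Gset n \<and> [m = k + l] (mod n)" using m_Gset m_cong ..
    show "m' = m" if "m' \<in> Gset n \<and> [m' = k + l] (mod n)" for m'
      using that m_cong m_Gset by (metis cong_Gset_imp_eq cong_trans cong_sym)
  qed
  ultimately show ?thesis by simp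
qed

lemma oplus_commute: "oplus n k l = oplus n l k"
  by (simp add: oplus_def add.commute)

lemma bij_betw_oplus:
  assumes "n \<ge> 1"
  shows "bij_betw (\<lambda>k. oplus n k l) (Gset n) (Gset n)"
proof -
  have "inj_on (\<lambda>k. oplus n k l) (Gset n)"
  proof (rule inj_onI)
    fix k k' assume "k \<in> Gset n" "k' \<in> Gset n" "oplus n k l = oplus n k' l"
    moreover have "[k + l = k' + l] (mod n)"
      using oplus_Gset_cong[OF assms] \<open>oplus n k l = oplus n k' l\<close> by (metis cong_sym cong_trans)
    ultimately show "k = k'" by (simp add: cong_Gset_imp_eq cong_add_rcancel_nat)
  qed
  moreover have "(\<lambda>k. oplus n k l) ` Gset n \<subseteq> Gset n"
    using oplus_Gset_cong[OF assms] by auto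
  ultimately show ?thesis
    by (simp add: bij_betw_def endo_inj_surj)
qed

lemma mult_if_zero:
  "(if P then a else 0) * x = (if P then a * x else (0::complex))"
  "x * (if P then a else 0) = (if P then x * a else (0::complex))"
  by simp_all

text \<open>The compression (<f| \<otimes> I) X (|f> \<otimes> I) of an operator X on H \<otimes> K to K.\<close>
definition kcompress ::
    "'a set \<Rightarrow> ('a \<Rightarrow> complex) \<Rightarrow> ('a \<times> 'b \<Rightarrow> 'a \<times> 'b \<Rightarrow> complex) \<Rightarrow> 'b \<Rightarrow> 'b \<Rightarrow> complex" where
  "kcompress S f X = (\<lambda>c c'. \<Sum>q\<in>S. (\<Sum>p\<in>S. cnj (f p) * X (p, c) (q, c')) * f q)"

lemma kcomp_tensor_outer_kid_left:
  assumes "finite S" "finite T" "c \<in> T"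
  shows "kcomp (S \<times> T) (ktensor (outer f) kid) X (p, c) w = f p * (\<Sum>q\<in>S. cnj (f q) * X (q, c) w)"
proof -
  have "kcomp (S \<times> T) (ktensor (outer f) kid) X (p, c) w
      = (\<Sum>q\<in>S. \<Sum>c''\<in>T. f p * cnj (f q) * kid c c'' * X (q, c'') w)"
    unfolding kcomp_def by (simp add: sum.cartesian_product' ktensor_def outer_def)
  also have "\<dots> = (\<Sum>q\<in>S. f p * (cnj (f q) * X (q, c) w))"
    using assms by (simp add: kid_def if_distrib if_distribR mult.assoc cong: if_cong)
  finally show ?thesis by (simp add: sum_distrib_left)
qed

lemma kcomp_tensor_outer_kid_right:
  assumes "finite S" "finite T" "c \<in> T"
  shows "kcomp (S \<times> T) Y (ktensor (outer f) kid) w (p, c) = (\<Sum>q\<in>S. Y w (q, c) * f q) * cnj (f p)"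
proof -
  have "kcomp (S \<times> T) Y (ktensor (outer f) kid) w (p, c)
      = (\<Sum>q\<in>S. \<Sum>c''\<in>T. Y w (q, c'') * (f q * cnj (f p) * kid c'' c))"
    unfolding kcomp_def by (simp add: sum.cartesian_product' ktensor_def outer_def)
  also have "\<dots> = (\<Sum>q\<in>S. Y w (q, c) * f q * cnj (f p))"
    using assms by (simp add: kid_def if_distrib if_distribR mult.assoc cong: if_cong)
  finally show ?thesis by (simp add: sum_distrib_right)
qed

lemma kcomp_tensor_outer_kid_sandwich:
  assumes "finite S" "finite T" "c \<in> T" "c' \<in> T"
  shows "kcomp (S \<times> T) (kcomp (S \<times> T) (ktensor (outer f) kid) X) (ktensor (outer f) kid) (p, c) (p', c')
       = f p * kcompress S f X c c' * cnj (f p')"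
  unfolding kcomp_tensor_outer_kid_right[OF assms(1,2,4)] kcomp_tensor_outer_kid_left[OF assms(1-3)]
    kcompress_def
  by (simp add: sum_distrib_left sum_distrib_right mult_ac)

lemma ptrace1_tensor_outer_kid_sandwich:
  assumes "finite S" "finite T" "c \<in> T" "c' \<in> T"
  shows "ptrace1 S (kcomp (S \<times> T) (kcomp (S \<times> T) (ktensor (outer f) kid) X) (ktensor (outer f) kid)) c c'
       = inner_on S f f * kcompress S f X c c'"
  unfolding ptrace1_def kcomp_tensor_outer_kid_sandwich[OF assms] inner_on_def
  by (simp add: sum_distrib_left sum_distrib_right mult_ac)

lemma ktrace_Times:
  assumes "finite S" "finite T"
  shows "ktrace (S \<times> T) Y = ktrace T (ptrace1 S Y)"
  unfolding ktrace_def ptrace1_def sum.cartesian_product' by (rule sum.swap)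

lemma ktrace_unitary_conj:
  assumes "finite S" "unitary_on S V"
  shows "ktrace S (kcomp S (kcomp S V A) (kadj V)) = ktrace S A"
proof -
  have "ktrace S (kcomp S (kcomp S V A) (kadj V))
      = (\<Sum>x\<in>S. \<Sum>w\<in>S. \<Sum>z\<in>S. A z w * (cnj (V x w) * V x z))"
    unfolding ktrace_def kcomp_def kadj_def by (simp add: sum_distrib_left sum_distrib_right mult_ac)
  also have "\<dots> = (\<Sum>x\<in>S. \<Sum>z\<in>S. \<Sum>w\<in>S. A z w * (cnj (V x w) * V x z))"
    by (rule sum.cong[OF refl], rule sum.swap)
  also have "\<dots> = (\<Sum>z\<in>S. \<Sum>x\<in>S. \<Sum>w\<in>S. A z w * (cnj (V x w) * V x z))"
    by (rule sum.swap)
  also have "\<dots> = (\<Sum>z\<in>S. \<Sum>w\<in>S. A z w * kcomp S (kadj V) V w z)"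
    unfolding kcomp_def kadj_def sum_distrib_left by (rule sum.cong[OF refl], rule sum.swap)
  also have "\<dots> = (\<Sum>z\<in>S. \<Sum>w\<in>S. A z w * kid w z)"
    using assms(2) by (simp add: unitary_on_def)
  also have "\<dots> = ktrace S A"
    using assms(1) by (simp add: kid_def ktrace_def if_distrib cong: if_cong)
  finally show ?thesis .
qed

lemma unitary_on_monomial:
  assumes "finite S" "bij_betw \<pi> S S"
    and V: "\<And>x y. x \<in> S \<Longrightarrow> V x y = (if y = \<pi> x then u x else 0)"
    and u: "\<And>x. x \<in> S \<Longrightarrow> cnj (u x) * u x = 1"
  shows "unitary_on S V"
  unfolding unitary_on_def
proof (intro ballI conjI)
  fix x y assume "x \<in> S" "y \<in> S"
  have "\<pi> x \<in> S" "\<pi> x = \<pi> y \<longleftrightarrow> x = y"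
    using assms(2) \<open>x \<in> S\<close> \<open>y \<in> S\<close> by (auto simp: bij_betw_def inj_on_eq_iff)
  then show "kcomp S V (kadj V) x y = kid x y"
    using \<open>x \<in> S\<close> \<open>y \<in> S\<close> u[of x] u[of y] assms(1)
    by (simp add: kcomp_def kadj_def kid_def V if_distrib if_distribR mult.commute cong: if_cong)
  have "kcomp S (kadj V) V x y = (\<Sum>z\<in>S. if x = \<pi> z \<and> y = \<pi> z then 1 else 0)"
    unfolding kcomp_def kadj_def by (intro sum.cong) (auto simp: V u)
  also have "\<dots> = (\<Sum>z\<in>S. if x = z \<and> y = z then 1 else 0)"
    using sum.reindex_bij_betw[OF assms(2), of "\<lambda>z. if x = z \<and> y = z then 1 else 0"] by simp
  also have "\<dots> = kid x y"
    using \<open>x \<in> S\<close> assms(1) by (cases "x = y") (auto simp: kid_def intro: sum.neutral)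
  finally show "kcomp S (kadj V) V x y = kid x y" .
qed

definition flat :: "nat \<Rightarrow> (nat \<Rightarrow> complex) \<Rightarrow> bool" where
  "flat n f \<longleftrightarrow> (\<forall>l\<in>Gset n. (cmod (f l))\<^sup>2 = 1 / real n)"

lemma flat_mult_cnj:
  assumes "flat n f" "l \<in> Gset n"
  shows "f l * cnj (f l) = 1 / of_nat n" "cnj (f l) * f l = 1 / of_nat n"
  using assms unfolding flat_def by (simp_all add: complex_norm_square[symmetric] mult.commute)

lemma embed_outer:
  "embed n (outer h) (k, l) (k', l') =
     (if k = l \<and> k' = l' \<and> k \<in> Gset n \<and> k' \<in> Gset n then h k * cnj (h k') else 0)"
proof -
  have J: "kcomp (Gset n) Jop (outer h) (k, l) m = (if k = l \<and> k \<in> Gset n then h k * cnj (h m) else 0)" for m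
    unfolding kcomp_def Jop_def outer_def
    by (cases "k = l") (auto simp: mult_if_zero if_distrib[of cnj] cong: if_cong)
  show ?thesis
    unfolding embed_def kcomp_def[of _ "kcomp (Gset n) Jop (outer h)"] J
    unfolding kadj_def Jop_def
    by (cases "k' = l'") (auto simp: mult_if_zero if_distrib[of cnj] cong: if_cong)
qed

lemma xi_Pair: "xi n b i j (m, r) = (if m = oplus n r j then b i m else 0)"
  by (simp add: xi_def)

lemma inner_on_xi:
  assumes "n \<ge> 1" "flat n (b i)"
  shows "inner_on (Gset n \<times> Gset n) (xi n b i j) (xi n b i j) = 1"
proof -
  have "inner_on (Gset n \<times> Gset n) (xi n b i j) (xi n b i j)
      = (\<Sum>r\<in>Gset n. \<Sum>m\<in>Gset n. cnj (xi n b i j (m, r)) * xi n b i j (m, r))"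
    unfolding inner_on_def sum.cartesian_product' by (rule sum.swap)
  also have "\<dots> = (\<Sum>r\<in>Gset n. cnj (b i (oplus n r j)) * b i (oplus n r j))"
    using oplus_Gset_cong[OF assms(1)]
    by (simp add: xi_Pair mult_if_zero if_distrib[of cnj] cong: if_cong)
  also have "\<dots> = (\<Sum>r\<in>Gset n. 1 / of_nat n)"
    using assms by (simp add: flat_mult_cnj oplus_Gset_cong)
  also have "\<dots> = 1"
    using assms(1) by (simp add: Gset_def)
  finally show ?thesis .
qed

lemma kcompress_xi_embed:
  assumes "n \<ge> 1" "c \<in> Gset n" "c' \<in> Gset n"
  shows "kcompress (Gset n \<times> Gset n) (xi n b i j) (kassoc (ktensor \<rho> (embed n (outer h)))) c c'
       = h c * cnj (h c') * cnj (b i (oplus n c j)) * \<rho> (oplus n c j) (oplus n c' j) * b i (oplus n c' j)"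
proof -
  let ?X = "kassoc (ktensor \<rho> (embed n (outer h)))"
  have oplus: "oplus n k l \<in> Gset n" for k l
    using oplus_Gset_cong[OF assms(1)] by blast
  have X: "?X ((a, r), c) ((a', r'), c') = (if r = c \<and> r' = c' then \<rho> a a' * (h c * cnj (h c')) else 0)"
    for a r a' r'
    using assms(2,3) by (simp add: kassoc_def ktensor_def embed_outer)
  have row: "(\<Sum>p\<in>Gset n \<times> Gset n. cnj (xi n b i j p) * ?X (p, c) ((a', r'), c'))
      = (if r' = c' then cnj (b i (oplus n c j)) * (\<rho> (oplus n c j) a' * (h c * cnj (h c'))) else 0)" for a' r'
    using assms(2) oplus
    by (cases "r' = c'")
      (simp_all add: sum.cartesian_product' X xi_Pair mult_if_zero if_distrib[of cnj] cong: if_cong)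
  have "kcompress (Gset n \<times> Gset n) (xi n b i j) ?X c c'
      = (\<Sum>(a', r')\<in>Gset n \<times> Gset n.
           (if r' = c' then cnj (b i (oplus n c j)) * (\<rho> (oplus n c j) a' * (h c * cnj (h c'))) else 0)
           * xi n b i j (a', r'))"
    unfolding kcompress_def by (rule sum.cong) (auto simp: row)
  also have "\<dots> = cnj (b i (oplus n c j)) * (\<rho> (oplus n c j) (oplus n c' j) * (h c * cnj (h c')))
      * b i (oplus n c' j)"
    unfolding sum.cartesian_product' using assms(3) oplus
    by (subst sum.swap) (simp add: xi_Pair mult_if_zero cong: if_cong)
  finally show ?thesis by (simp add: mult_ac)
qed

lemma Vop_eq:
  assumes "n \<ge> 1" "x \<in> Gset n"
  shows "Vop n b h i j x y = (if y = oplus n x j then of_nat n * h x * cnj (b i y) else 0)"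
proof -
  have HU: "kcomp (Gset n) (mult_op h) (Uop n j) x z = (if z = oplus n x j then h x else 0)" for z
    using assms(2)
    by (simp add: kcomp_def mult_op_def Uop_def oplus_commute if_distrib[of "\<lambda>u. u * _"] cong: if_cong)
  show ?thesis
    unfolding Vop_def kcomp_def[of _ "kcomp (Gset n) (mult_op h) (Uop n j)"] HU
    using oplus_Gset_cong[OF assms(1)]
    by (simp add: kadj_def Bop_def mult_op_def mult_if_zero if_distrib[of cnj] cong: if_cong)
qed

lemma unitary_on_Vop:
  assumes "n \<ge> 1" "flat n h" "flat n (b i)"
  shows "unitary_on (Gset n) (Vop n b h i j)"
proof (rule unitary_on_monomial)
  show "bij_betw (\<lambda>x. oplus n x j) (Gset n) (Gset n)"
    using assms(1) by (rule bij_betw_oplus)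
  show "Vop n b h i j x y = (if y = oplus n x j then of_nat n * h x * cnj (b i (oplus n x j)) else 0)"
    if "x \<in> Gset n" for x y
    using Vop_eq[OF assms(1) that] by simp
  show "cnj (of_nat n * h x * cnj (b i (oplus n x j))) * (of_nat n * h x * cnj (b i (oplus n x j))) = 1"
    if "x \<in> Gset n" for x
  proof -
    have "oplus n x j \<in> Gset n"
      using oplus_Gset_cong[OF assms(1)] by blast
    then have "cnj (of_nat n * h x * cnj (b i (oplus n x j))) * (of_nat n * h x * cnj (b i (oplus n x j)))
        = of_nat n * of_nat n * (cnj (h x) * h x) * (b i (oplus n x j) * cnj (b i (oplus n x j)))"
      by (simp add: mult_ac)
    also have "\<dots> = 1"
      using assms \<open>x \<in> Gset n\<close> \<open>oplus n x j \<in> Gset n\<close> by (simp add: flat_mult_cnj)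
    finally show ?thesis .
  qed
qed simp

lemma Vop_conj_eq:
  assumes "n \<ge> 1" "x \<in> Gset n" "y \<in> Gset n"
  shows "kcomp (Gset n) (kcomp (Gset n) (Vop n b h i j) \<rho>) (kadj (Vop n b h i j)) x y
       = (of_nat n)\<^sup>2 * (h x * cnj (h y) * cnj (b i (oplus n x j)) * \<rho> (oplus n x j) (oplus n y j)
           * b i (oplus n y j))"
  using assms oplus_Gset_cong[OF assms(1)]
  by (simp add: kcomp_def kadj_def Vop_eq mult_if_zero if_distrib[of cnj] power2_eq_square mult_ac
      cong: if_cong)

lemma ptrace1_sandwich_outer:
  assumes "n \<ge> 1" "flat n (b i)" "x \<in> Gset n" "y \<in> Gset n"
  shows "ptrace1 (Gset n \<times> Gset n) (sandwich n b i j \<rho> (outer h)) x y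
       = kcomp (Gset n) (kcomp (Gset n) (Vop n b h i j) \<rho>) (kadj (Vop n b h i j)) x y / (of_nat n)\<^sup>2"
  using assms(1) unfolding sandwich_def Let_def Fop_def G3_def
  by (simp add: ptrace1_tensor_outer_kid_sandwich assms inner_on_xi kcompress_xi_embed Vop_conj_eq)

lemma ktrace_sandwich_outer:
  assumes "n \<ge> 1" "flat n h" "flat n (b i)" "is_state (Gset n) \<rho>"
  shows "ktrace (G3 n) (sandwich n b i j \<rho> (outer h)) = 1 / (of_nat n)\<^sup>2"
proof -
  let ?V = "Vop n b h i j"
  have "ktrace (G3 n) (sandwich n b i j \<rho> (outer h))
      = ktrace (Gset n) (ptrace1 (Gset n \<times> Gset n) (sandwich n b i j \<rho> (outer h)))"
    unfolding G3_def by (simp add: ktrace_Times)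
  also have "\<dots> = ktrace (Gset n) (kcomp (Gset n) (kcomp (Gset n) ?V \<rho>) (kadj ?V)) / (of_nat n)\<^sup>2"
    unfolding ktrace_def using assms(1,3) by (simp add: ptrace1_sandwich_outer sum_divide_distrib)
  also have "\<dots> = ktrace (Gset n) \<rho> / (of_nat n)\<^sup>2"
    using assms(1-3) by (simp add: ktrace_unitary_conj unitary_on_Vop)
  also have "\<dots> = 1 / (of_nat n)\<^sup>2"
    using assms(4) by (simp add: is_state_def)
  finally show ?thesis .
qed

theorem mainTheorem15:
  fixes n :: nat and b :: "nat \<Rightarrow> nat \<Rightarrow> complex" and h :: "nat \<Rightarrow> complex"
    and \<rho> :: "nat \<Rightarrow> nat \<Rightarrow> complex" and i j :: nat
  assumes "n \<ge> 1"
    and "orthonormal_basis_on n b"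
    and "\<forall>k\<in>Gset n. \<forall>l\<in>Gset n. (cmod (b k l))\<^sup>2 = 1 / real n"
    and "\<forall>l\<in>Gset n. (cmod (h l))\<^sup>2 = 1 / real n"
    and "is_state (Gset n) \<rho>"
    and "i \<in> Gset n" and "j \<in> Gset n"
  shows "(\<forall>x\<in>Gset n. \<forall>y\<in>Gset n.
            Lambda n b i j \<rho> (outer h) x y
            = kcomp (Gset n) (kcomp (Gset n) (Vop n b h i j) \<rho>) (kadj (Vop n b h i j)) x y)
         \<and> unitary_on (Gset n) (Vop n b h i j)"
proof -
  have h: "flat n h" and b: "flat n (b i)"
    using assms(3,4,6) by (simp_all add: flat_def)
  have "(of_nat n :: complex) \<noteq> 0"
    using assms(1) by simp
  then show ?thesis
    using assms(1,5) h b
    by (simp add: Lambda_def ptrace1_sandwich_outer ktrace_sandwich_outer unitary_on_Vop)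
qed

end
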